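(* Let $n,T$ be positive integers, let $\Theta\subseteq\mathbb{R}^n$ be a closed convex set, and let $c^*\in\Theta$. For $t=1,\dots,T$ let $X_t\subseteq\mathbb{R}^n$ be non-empty and compact, and assume the agent's action $x_t\in X_t$ satisfies $x_t\in\arg\max_{x\in X_t}\langle c^*,x\rangle$. Assume: the $\ell_2$-diameter of $\Theta$ is at most $D>0$; the $\ell_2$-diameter of each $X_t$ is at most $K>0$; and there is $B>0$ with $\max\{\langle c-c',x-x'\rangle : c,c'\in\Theta,\ x,x'\in X_t\}\le B$ for all $t$. Let $\hat c_1,\dots,\hat c_T\in\Theta$ be the outputs of Online Newton Step (ONS, described in the context) run on $\Theta$ with the loss functions $$\ell^\eta_t(c)\coloneqq -\eta\langle \hat c_t-c,\hat x_t-x_t\rangle+\eta^2\langle \hat c_t-c,\hat x_t-x_t\rangle^2\qquad (c\in\Theta),$$ where $\hat x_t\in\arg\max_{x\in X_t}\langle \hat c_t,x\rangle$ and $\eta=\frac{1}{5B}$. Then $$R^{c^*}_T\coloneqq\sum_{t=1}^T\langle c^*,x_t-\hat x_t\rangle\ \le\ \tilde R^{c^*}_T\coloneqq\sum_{t=1}^T\langle \hat c_t-c^*,\hat x_t-x_t\rangle\ =\ O\!\left(Bn\ln\!\left(\frac{DKT}{Bn}\right)\right),$$ where the $O$ hides an absolute constant.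
   Context: Online Newton Step (ONS) on a closed convex set $\mathcal{W}\subseteq\mathbb{R}^n$ of $\ell_2$-diameter at most $W$, applied to differentiable losses $q_1,\dots,q_T$, with parameter $\gamma>0$: set $\varepsilon=\frac{n}{W^2\gamma^2}$, $A_0=\varepsilon I_n$, pick any $w_1\in\mathcal{W}$; for $t=1,\dots,T$: play $w_t$, observe $q_t$, set $A_t=A_{t-1}+\nabla q_t(w_t)\nabla q_t(w_t)^\top$ and $w_{t+1}=\arg\min_{w\in\mathcal{W}}\|w_t-\frac1\gamma A_t^{-1}\nabla q_t(w_t)-w\|_{A_t}^2$, where $\|y\|_A=\sqrt{y^\top Ay}$. In this theorem $\mathcal{W}=\Theta$, $W=D$, $w_t=\hat c_t$, $q_t=\ell^\eta_t$ (note $\nabla\ell^\eta_t(c)=\eta(1-2\eta\langle\hat x_t-x_t,\hat c_t-c\rangle)(\hat x_t-x_t)$), and $\gamma=\frac{1}{(1+2\eta B)^2}=\frac{25}{49}$. The learner chooses $\hat c_t$ before observing $(X_t,x_t)$; after round $t$ it observes $(X_t,x_t)$. *)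

theory Defs
  imports "HOL-Analysis.Analysis"
begin

text \<open>Vectors of R^n are represented as functions nat => real that vanish outside
  the index set {..<n} (so that the dimension n can be quantified inside a formula,
  which is needed to state that the hidden constant is absolute, i.e. independent of n).
  Topological notions (closed, compact) refer to the product topology on nat => real,
  which on the closed subspace Rn n coincides with the Euclidean topology.
  Matrices are functions nat => nat => real, only entries with indices below n matter.\<close>

definition Rn :: "nat \<Rightarrow> (nat \<Rightarrow> real) set" where
  "Rn n = {v. \<forall>i\<ge>n. v i = 0}"

definition vadd :: "(nat \<Rightarrow> real) \<Rightarrow> (nat \<Rightarrow> real) \<Rightarrow> (nat \<Rightarrow> real)" where
  "vadd u v = (\<lambda>i. u i + v i)"

definition vsub :: "(nat \<Rightarrow> real) \<Rightarrow> (nat \<Rightarrow> real) \<Rightarrow> (nat \<Rightarrow> real)" where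
  "vsub u v = (\<lambda>i. u i - v i)"

definition vscale :: "real \<Rightarrow> (nat \<Rightarrow> real) \<Rightarrow> (nat \<Rightarrow> real)" where
  "vscale a v = (\<lambda>i. a * v i)"

definition ip :: "nat \<Rightarrow> (nat \<Rightarrow> real) \<Rightarrow> (nat \<Rightarrow> real) \<Rightarrow> real" where
  "ip n u v = (\<Sum>i<n. u i * v i)"

definition enorm :: "nat \<Rightarrow> (nat \<Rightarrow> real) \<Rightarrow> real" where
  "enorm n v = sqrt (ip n v v)"

definition convex_n :: "(nat \<Rightarrow> real) set \<Rightarrow> bool" where
  "convex_n S \<longleftrightarrow> (\<forall>u\<in>S. \<forall>v\<in>S. \<forall>a::real. 0 \<le> a \<and> a \<le> 1 \<longrightarrow>
      vadd (vscale a u) (vscale (1 - a) v) \<in> S)"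

definition diam_le :: "nat \<Rightarrow> (nat \<Rightarrow> real) set \<Rightarrow> real \<Rightarrow> bool" where
  "diam_le n S D \<longleftrightarrow> (\<forall>u\<in>S. \<forall>v\<in>S. enorm n (vsub u v) \<le> D)"

definition is_argmax :: "nat \<Rightarrow> (nat \<Rightarrow> real) \<Rightarrow> (nat \<Rightarrow> real) set \<Rightarrow> (nat \<Rightarrow> real) \<Rightarrow> bool" where
  "is_argmax n c X x \<longleftrightarrow> x \<in> X \<and> (\<forall>y\<in>X. ip n c y \<le> ip n c x)"

definition mvmul :: "nat \<Rightarrow> (nat \<Rightarrow> nat \<Rightarrow> real) \<Rightarrow> (nat \<Rightarrow> real) \<Rightarrow> (nat \<Rightarrow> real)" where
  "mvmul n A v = (\<lambda>i. if i < n then (\<Sum>j<n. A i j * v j) else 0)"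

definition anorm_sq :: "nat \<Rightarrow> (nat \<Rightarrow> nat \<Rightarrow> real) \<Rightarrow> (nat \<Rightarrow> real) \<Rightarrow> real" where
  "anorm_sq n A v = (\<Sum>i<n. \<Sum>j<n. v i * A i j * v j)"

definition ons_matrix :: "real \<Rightarrow> (nat \<Rightarrow> (nat \<Rightarrow> real)) \<Rightarrow> nat \<Rightarrow> (nat \<Rightarrow> nat \<Rightarrow> real)" where
  "ons_matrix eps g t = (\<lambda>i j. eps * (if i = j then 1 else 0) + (\<Sum>s\<in>{1..t}. g s i * g s j))"

text \<open>w is a run of Online Newton Step on the set Wset (diameter bound W) with
  parameter gamma, for rounds 1..T, where grad t c is the gradient of the loss q_t at c.
  A_t^{-1} g_t is written as the (unique, A_t being positive definite) vector z in R^n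
  with A_t z = g_t; the projection step says that w (t+1) is a minimiser over Wset of
  the squared A_t-norm distance to w_t - (1/gamma) A_t^{-1} g_t.\<close>
definition is_ONS_run ::
  "nat \<Rightarrow> (nat \<Rightarrow> real) set \<Rightarrow> real \<Rightarrow> real \<Rightarrow> (nat \<Rightarrow> (nat \<Rightarrow> real) \<Rightarrow> (nat \<Rightarrow> real))
     \<Rightarrow> nat \<Rightarrow> (nat \<Rightarrow> (nat \<Rightarrow> real)) \<Rightarrow> bool" where
  "is_ONS_run n Wset W gamma grad T w \<longleftrightarrow>
     (let eps = real n / (W\<^sup>2 * gamma\<^sup>2);
          g = (\<lambda>s. grad s (w s))
      in w 1 \<in> Wset \<and>
         (\<forall>t\<in>{1..T}. \<exists>z\<in>Rn n. mvmul n (ons_matrix eps g t) z = g t \<and>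
            (let y = vsub (w t) (vscale (1 / gamma) z)
             in w (t + 1) \<in> Wset \<and>
                (\<forall>v\<in>Wset. anorm_sq n (ons_matrix eps g t) (vsub y (w (t + 1)))
                            \<le> anorm_sq n (ons_matrix eps g t) (vsub y v)))))"

definition surr_loss ::
  "nat \<Rightarrow> real \<Rightarrow> (nat \<Rightarrow> real) \<Rightarrow> (nat \<Rightarrow> real) \<Rightarrow> (nat \<Rightarrow> real) \<Rightarrow> (nat \<Rightarrow> real) \<Rightarrow> real" where
  "surr_loss n eta chat xhat x c =
     - eta * ip n (vsub chat c) (vsub xhat x) + eta\<^sup>2 * (ip n (vsub chat c) (vsub xhat x))\<^sup>2"

definition surr_grad ::
  "nat \<Rightarrow> real \<Rightarrow> (nat \<Rightarrow> real) \<Rightarrow> (nat \<Rightarrow> real) \<Rightarrow> (nat \<Rightarrow> real) \<Rightarrow> (nat \<Rightarrow> real) \<Rightarrow> (nat \<Rightarrow> real)" where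
  "surr_grad n eta chat xhat x c =
     vscale (eta * (1 - 2 * eta * ip n (vsub xhat x) (vsub chat c))) (vsub xhat x)"

end

theory Submission
  imports Defs "Jordan_Normal_Form.Determinant"
begin

text \<open>The regret is at most the surrogate regret because \<open>x t\<close> maximises \<open>\<langle>cstar, \<cdot>\<rangle>\<close> and
  \<open>xhat t\<close> maximises \<open>\<langle>chat t, \<cdot>\<rangle>\<close>. At \<open>chat t\<close> the surrogate loss has gradient
  \<open>g t = \<eta> (xhat t - x t)\<close>, so \<open>b t = \<langle>g t, chat t - cstar\<rangle>\<close> is \<open>\<eta>\<close> times the surrogate regret of
  round \<open>t\<close> and lies in \<open>[0, 1/5]\<close>. The ONS analysis (the projection in the norm of \<open>A t\<close> does not
  increase the distance to \<open>cstar\<close>, and these distances telescope) bounds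
  \<open>\<Sum>t. 2\<gamma> b t - (\<gamma> b t)\<^sup>2\<close> by \<open>n + \<Sum>t. \<langle>g t, (A t)\<^sup>-\<^sup>1 g t\<rangle>\<close>. By the matrix determinant lemma and
  Hadamard's inequality the last sum is at most \<open>ln (det (A T) / det (A 0)) \<le> n ln (1 + T \<eta>\<^sup>2 K\<^sup>2 / (n \<epsilon>))\<close>.
  Since \<open>\<gamma> b t \<le> 1\<close>, the left-hand side dominates \<open>\<gamma> \<Sum>t. b t\<close>, and the constants work out to
  \<open>40 B n ln (DKT/(Bn))\<close>.\<close>

section \<open>Determinants of positive definite matrices\<close>

definition sym_mat :: "nat \<Rightarrow> (nat \<Rightarrow> nat \<Rightarrow> real) \<Rightarrow> bool" where
  "sym_mat n A \<longleftrightarrow> (\<forall>i<n. \<forall>j<n. A i j = A j i)"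

definition pos_def_mat :: "nat \<Rightarrow> (nat \<Rightarrow> nat \<Rightarrow> real) \<Rightarrow> bool" where
  "pos_def_mat n A \<longleftrightarrow> (\<forall>x. (\<exists>i<n. x i \<noteq> 0) \<longrightarrow> 0 < anorm_sq n A x)"

definition bordered_mat ::
  "nat \<Rightarrow> (nat \<Rightarrow> nat \<Rightarrow> real) \<Rightarrow> (nat \<Rightarrow> real) \<Rightarrow> (nat \<Rightarrow> real) \<Rightarrow> real \<Rightarrow> real mat" where
  "bordered_mat n M b c d = mat (Suc n) (Suc n) (\<lambda>(i,j).
     if i < n \<and> j < n then M i j else if i < n then b i else if j < n then c j else d)"

lemma det_last_column_zero:
  fixes R :: "real mat"
  assumes R: "R \<in> carrier_mat (Suc n) (Suc n)" and z: "\<And>i. i < n \<Longrightarrow> R $$ (i,n) = 0"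
  shows "det R = R $$ (n,n) * det (mat n n (\<lambda>(i,j). R $$ (i,j)))"
proof -
  have "det R = (\<Sum>i<Suc n. R $$ (i,n) * cofactor R i n)"
    using laplace_expansion_column[OF R, of n] by simp
  also have "\<dots> = R $$ (n,n) * det (mat_delete R n n)"
    by (simp add: z cofactor_def)
  also have "mat_delete R n n = mat n n (\<lambda>(i,j). R $$ (i,j))"
    using R by (intro eq_matI) (auto simp: mat_delete_def)
  finally show ?thesis .
qed

lemma det_unit_upper_triangular:
  fixes U :: "real mat"
  assumes U: "U \<in> carrier_mat m m" and ut: "\<And>i j. i < m \<Longrightarrow> j < i \<Longrightarrow> U $$ (i,j) = 0"
    and diag: "\<And>i. i < m \<Longrightarrow> U $$ (i,i) = 1"
  shows "det U = 1"
proof -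
  have "upper_triangular U" using U ut by (auto simp: upper_triangular_def)
  then have "det U = prod_list (diag_mat U)" using det_upper_triangular U by blast
  also have "diag_mat U = replicate m 1"
    using U diag by (intro nth_equalityI) (auto simp: diag_mat_def)
  finally show ?thesis by simp
qed

text \<open>Factor the bordered matrix as a unit upper triangular matrix times a matrix whose
  last column is \<open>(0, d)\<close>; the upper left block of the latter is the Schur complement of \<open>d\<close>.\<close>
lemma det_bordered_mat_schur:
  assumes d: "d \<noteq> 0"
  shows "det (bordered_mat n M b c d) = d * det (mat n n (\<lambda>(i,j). M i j - b i * c j / d))"
proof -
  define L where "L = mat (Suc n) (Suc n) (\<lambda>(i,j).
    if i = j then 1 else if i < n \<and> j = n then b i / d else (0::real))"
  define R where "R = mat (Suc n) (Suc n) (\<lambda>(i,j).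
    if i < n \<and> j < n then M i j - b i * c j / d else if i < n then 0 else if j < n then c j else d)"
  have L: "L \<in> carrier_mat (Suc n) (Suc n)" and R: "R \<in> carrier_mat (Suc n) (Suc n)"
    by (auto simp: L_def R_def)
  have "bordered_mat n M b c d = L * R"
  proof (rule eq_matI)
    fix i j assume "i < dim_row (L * R)" and "j < dim_col (L * R)"
    then have i: "i < Suc n" and j: "j < Suc n" using L R by auto
    have "(\<Sum>k<n. L $$ (i,k) * R $$ (k,j)) = (\<Sum>k<n. if k = i then R $$ (i,j) else 0)"
      using i by (intro sum.cong) (auto simp: L_def)
    then have "(L * R) $$ (i,j) = (if i < n then R $$ (i,j) else 0) + L $$ (i,n) * R $$ (n,j)"
      using i j L R by (simp add: scalar_prod_def atLeast0LessThan)
    then show "bordered_mat n M b c d $$ (i,j) = (L * R) $$ (i,j)"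
      using i j d by (auto simp: bordered_mat_def L_def R_def)
  qed (auto simp: bordered_mat_def L_def R_def)
  then have "det (bordered_mat n M b c d) = det L * det R" using det_mult[OF L R] by simp
  also have "det L = 1" by (rule det_unit_upper_triangular[OF L]) (auto simp: L_def)
  also have "det R = d * det (mat n n (\<lambda>(i,j). R $$ (i,j)))"
    by (subst det_last_column_zero[OF R]) (auto simp: R_def)
  also have "mat n n (\<lambda>(i,j). R $$ (i,j)) = mat n n (\<lambda>(i,j). M i j - b i * c j / d)"
    by (intro eq_matI) (auto simp: R_def)
  finally show ?thesis by simp
qed

lemma det_bordered_mat_solve:
  assumes z: "\<And>i. i < n \<Longrightarrow> (\<Sum>j<n. M i j * z j) = b i"
  shows "det (bordered_mat n M b c d) = (d - (\<Sum>j<n. c j * z j)) * det (mat n n (\<lambda>(i,j). M i j))"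
proof -
  define U where "U = mat (Suc n) (Suc n) (\<lambda>(i,j).
    if i = j then 1 else if i < n \<and> j = n then z i else (0::real))"
  define R where "R = mat (Suc n) (Suc n) (\<lambda>(i,j).
    if i < n \<and> j < n then M i j else if i < n then 0 else if j < n then c j else d - (\<Sum>j<n. c j * z j))"
  have U: "U \<in> carrier_mat (Suc n) (Suc n)" and R: "R \<in> carrier_mat (Suc n) (Suc n)"
    by (auto simp: U_def R_def)
  have "bordered_mat n M b c d = R * U"
  proof (rule eq_matI)
    fix i j assume "i < dim_row (R * U)" and "j < dim_col (R * U)"
    then have i: "i < Suc n" and j: "j < Suc n" using U R by auto
    have RU: "(R * U) $$ (i,j) = (\<Sum>k<n. R $$ (i,k) * U $$ (k,j)) + R $$ (i,n) * U $$ (n,j)"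
      using i j U R by (simp add: scalar_prod_def atLeast0LessThan)
    show "bordered_mat n M b c d $$ (i,j) = (R * U) $$ (i,j)"
    proof (cases "j < n")
      case True
      have "(\<Sum>k<n. R $$ (i,k) * U $$ (k,j)) = (\<Sum>k<n. if k = j then R $$ (i,j) else 0)"
        using True i by (intro sum.cong) (auto simp: U_def)
      then show ?thesis using RU True i by (auto simp: bordered_mat_def U_def R_def)
    next
      case False
      then have jn: "j = n" using j by auto
      have "(\<Sum>k<n. R $$ (i,k) * U $$ (k,j))
          = (if i < n then (\<Sum>k<n. M i k * z k) else (\<Sum>k<n. c k * z k))"
        using jn i by (auto simp: U_def R_def intro!: sum.cong)
      then show ?thesis using RU jn i z by (auto simp: bordered_mat_def U_def R_def)
    qed
  qed (auto simp: bordered_mat_def U_def R_def)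
  then have "det (bordered_mat n M b c d) = det R * det U" using det_mult[OF R U] by simp
  also have "det U = 1" by (rule det_unit_upper_triangular[OF U]) (auto simp: U_def)
  also have "det R = (d - (\<Sum>j<n. c j * z j)) * det (mat n n (\<lambda>(i,j). R $$ (i,j)))"
    by (subst det_last_column_zero[OF R]) (auto simp: R_def)
  also have "mat n n (\<lambda>(i,j). R $$ (i,j)) = mat n n (\<lambda>(i,j). M i j)"
    by (intro eq_matI) (auto simp: R_def)
  finally show ?thesis by simp
qed

lemma anorm_sq_unit_vector:
  assumes i: "i < n"
  shows "anorm_sq n A (\<lambda>k. if k = i then 1 else 0) = A i i"
proof -
  define e :: "nat \<Rightarrow> real" where "e = (\<lambda>k. if k = i then 1 else 0)"
  have row: "(\<Sum>b<n. e a * A a b * e b) = e a * A a i" for a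
  proof -
    have "(\<Sum>b<n. e a * A a b * e b) = (\<Sum>b<n. if b = i then e a * A a i else 0)"
      by (intro sum.cong) (auto simp: e_def)
    then show ?thesis using i by simp
  qed
  have "(\<Sum>a<n. e a * A a i) = (\<Sum>a<n. if a = i then A i i else 0)"
    by (intro sum.cong) (auto simp: e_def)
  then show ?thesis using i unfolding anorm_sq_def row e_def[symmetric] by simp
qed

lemma pos_def_mat_diag_pos:
  assumes A: "pos_def_mat n A" and i: "i < n"
  shows "0 < A i i"
proof -
  have "(\<exists>k<n. (if k = i then 1 else 0 :: real) \<noteq> 0)
      \<longrightarrow> 0 < anorm_sq n A (\<lambda>k. if k = i then 1 else 0)"
    using A unfolding pos_def_mat_def by (rule spec)
  then have "0 < anorm_sq n A (\<lambda>k. if k = i then 1 else 0)" using i by auto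
  then show ?thesis using anorm_sq_unit_vector[OF i] by simp
qed

text \<open>Extending \<open>x\<close> by the last coordinate that minimises the quadratic form shows that the
  Schur complement of \<open>A n n\<close> inherits positive definiteness.\<close>
lemma anorm_sq_schur_complement:
  assumes sym: "sym_mat (Suc n) A" and d: "A n n \<noteq> 0"
  shows "anorm_sq (Suc n) A (\<lambda>k. if k < n then x k else - (\<Sum>j<n. A n j * x j) / A n n)
       = anorm_sq n (\<lambda>i j. A i j - A i n * A n j / A n n) x"
proof -
  define p where "p = (\<Sum>j<n. A n j * x j)"
  define s where "s = - p / A n n"
  define Q where "Q = (\<Sum>i<n. \<Sum>j<n. x i * A i j * x j)"
  have p': "(\<Sum>i<n. x i * A i n) = p"
    unfolding p_def using sym by (intro sum.cong) (auto simp: sym_mat_def)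
  have "anorm_sq (Suc n) A (\<lambda>k. if k < n then x k else s)
      = (\<Sum>i<n. (\<Sum>j<n. x i * A i j * x j) + x i * A i n * s)
         + ((\<Sum>j<n. s * A n j * x j) + s * A n n * s)"
    unfolding anorm_sq_def by simp
  also have "\<dots> = Q + s * (\<Sum>i<n. x i * A i n) + s * p + s * A n n * s"
    unfolding Q_def p_def by (simp add: sum.distrib sum_distrib_left algebra_simps)
  also have "\<dots> = Q - p * p / A n n"
    using d unfolding p' s_def by (simp add: field_simps)
  also have "\<dots> = anorm_sq n (\<lambda>i j. A i j - A i n * A n j / A n n) x"
  proof -
    have "anorm_sq n (\<lambda>i j. A i j - A i n * A n j / A n n) x
        = (\<Sum>i<n. \<Sum>j<n. x i * A i j * x j - (x i * A i n) * (A n j * x j) / A n n)"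
      unfolding anorm_sq_def by (intro sum.cong refl) (simp add: algebra_simps)
    also have "\<dots> = Q - (\<Sum>i<n. x i * A i n) * p / A n n"
      unfolding Q_def p_def by (simp add: sum_subtractf sum_divide_distrib sum_product)
    finally show ?thesis using p' by simp
  qed
  finally show ?thesis unfolding s_def p_def .
qed

text \<open>Hadamard's inequality, by induction on the dimension via Schur complements.\<close>
lemma det_pos_def_le_prod_diag:
  assumes "sym_mat n A" and "pos_def_mat n A"
  shows "0 < det (mat n n (\<lambda>(i,j). A i j)) \<and> det (mat n n (\<lambda>(i,j). A i j)) \<le> (\<Prod>i<n. A i i)"
  using assms
proof (induction n arbitrary: A)
  case 0
  have "det (mat 0 0 (\<lambda>(i,j). A i j)) = 1" by (rule det_dim_zero) auto
  then show ?case by simp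
next
  case (Suc n)
  define S where "S = (\<lambda>i j. A i j - A i n * A n j / A n n)"
  have sym: "A i j = A j i" if "i < Suc n" "j < Suc n" for i j
    using Suc.prems(1) that unfolding sym_mat_def by blast
  have dpos: "0 < A n n" using pos_def_mat_diag_pos[OF Suc.prems(2)] by simp
  have "mat (Suc n) (Suc n) (\<lambda>(i,j). A i j) = bordered_mat n A (\<lambda>i. A i n) (\<lambda>j. A n j) (A n n)"
    by (intro eq_matI) (auto simp: bordered_mat_def less_Suc_eq)
  then have detA: "det (mat (Suc n) (Suc n) (\<lambda>(i,j). A i j)) = A n n * det (mat n n (\<lambda>(i,j). S i j))"
    using dpos by (simp add: det_bordered_mat_schur S_def)
  have "sym_mat n S"
    unfolding sym_mat_def S_def using sym by (metis less_SucI lessI mult.commute)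
  moreover have Spd: "pos_def_mat n S"
    unfolding pos_def_mat_def
  proof (intro allI impI)
    fix x :: "nat \<Rightarrow> real" assume "\<exists>i<n. x i \<noteq> 0"
    define y where "y = (\<lambda>k. if k < n then x k else - (\<Sum>j<n. A n j * x j) / A n n)"
    have "(\<exists>i<Suc n. y i \<noteq> 0) \<longrightarrow> 0 < anorm_sq (Suc n) A y"
      using Suc.prems(2) unfolding pos_def_mat_def by (rule spec)
    moreover have "\<exists>i<Suc n. y i \<noteq> 0" using \<open>\<exists>i<n. x i \<noteq> 0\<close> unfolding y_def by auto
    ultimately show "0 < anorm_sq n S x"
      unfolding S_def y_def using anorm_sq_schur_complement[OF Suc.prems(1)] dpos by simp
  qed
  ultimately have IH: "0 < det (mat n n (\<lambda>(i,j). S i j)) \<and> det (mat n n (\<lambda>(i,j). S i j)) \<le> (\<Prod>i<n. S i i)"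
    using Suc.IH by blast
  have "(\<Prod>i<n. S i i) \<le> (\<Prod>i<n. A i i)"
  proof (rule prod_mono)
    fix i assume i: "i \<in> {..<n}"
    have "A i n * A n i = (A i n)\<^sup>2" using sym[of n i] i by (simp add: power2_eq_square)
    then have "S i i \<le> A i i" unfolding S_def using dpos by simp
    moreover have "0 < S i i" using pos_def_mat_diag_pos[OF Spd] i by simp
    ultimately show "0 \<le> S i i \<and> S i i \<le> A i i" by simp
  qed
  then show ?case using IH dpos detA by (simp add: mult_left_mono mult.commute)
qed


section \<open>Inner products and the ONS matrix\<close>

lemma ip_comm: "ip n u v = ip n v u"
  unfolding ip_def by (simp add: mult.commute)

lemma ip_vsub_left: "ip n (vsub u v) w = ip n u w - ip n v w"
  unfolding ip_def vsub_def by (simp add: algebra_simps sum_subtractf)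

lemma ip_vsub_right: "ip n w (vsub u v) = ip n w u - ip n w v"
  unfolding ip_def vsub_def by (simp add: algebra_simps sum_subtractf)

lemma ip_vscale_left: "ip n (vscale a u) w = a * ip n u w"
  unfolding ip_def vscale_def by (simp add: algebra_simps sum_distrib_left)

lemma ip_vscale_right: "ip n w (vscale a u) = a * ip n w u"
  by (simp add: ip_comm[of n w] ip_vscale_left)

lemma ip_self_nonneg: "0 \<le> ip n v v"
  unfolding ip_def by (auto intro: sum_nonneg)

lemma ip_self_le_sq_of_enorm_le:
  assumes "enorm n v \<le> K"
  shows "ip n v v \<le> K\<^sup>2"
proof -
  have "sqrt (ip n v v) \<le> K" using assms by (simp add: enorm_def)
  then have "(sqrt (ip n v v))\<^sup>2 \<le> K\<^sup>2"
    using ip_self_nonneg[of n v] by (intro power_mono) auto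
  then show ?thesis using ip_self_nonneg[of n v] by simp
qed

lemma ip_self_le_of_diam_le:
  assumes "diam_le n S D" and "u \<in> S" and "v \<in> S"
  shows "ip n (vsub u v) (vsub u v) \<le> D\<^sup>2"
  using assms unfolding diam_le_def by (blast intro: ip_self_le_sq_of_enorm_le)

definition bilin :: "nat \<Rightarrow> (nat \<Rightarrow> nat \<Rightarrow> real) \<Rightarrow> (nat \<Rightarrow> real) \<Rightarrow> (nat \<Rightarrow> real) \<Rightarrow> real" where
  "bilin n A p q = (\<Sum>i<n. \<Sum>j<n. p i * A i j * q j)"

lemma anorm_sq_bilin: "anorm_sq n A v = bilin n A v v"
  by (simp add: anorm_sq_def bilin_def)

lemma bilin_comm:
  assumes "sym_mat n A"
  shows "bilin n A p q = bilin n A q p"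
proof -
  have "bilin n A p q = (\<Sum>j<n. \<Sum>i<n. p i * A i j * q j)"
    unfolding bilin_def by (rule sum.swap)
  also have "\<dots> = bilin n A q p"
    unfolding bilin_def using assms by (intro sum.cong refl) (simp add: sym_mat_def)
  finally show ?thesis .
qed

lemma bilin_diff_self:
  assumes "sym_mat n A"
  shows "bilin n A (\<lambda>i. p i - s * q i) (\<lambda>i. p i - s * q i)
     = bilin n A p p - 2 * s * bilin n A p q + s\<^sup>2 * bilin n A q q"
proof -
  have "bilin n A (\<lambda>i. p i - s * q i) (\<lambda>i. p i - s * q i)
      = bilin n A p p - s * bilin n A p q - s * bilin n A q p + s\<^sup>2 * bilin n A q q"
    unfolding bilin_def
    by (simp add: algebra_simps power2_eq_square sum.distrib sum_subtractf sum_distrib_left)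
  then show ?thesis using bilin_comm[OF assms, of q p] by simp
qed

lemma bilin_mvmul_left:
  assumes "sym_mat n A" and "mvmul n A z = g"
  shows "bilin n A z v = ip n g v"
proof -
  have g: "g j = (\<Sum>i<n. A j i * z i)" if "j < n" for j
    using assms(2) that unfolding mvmul_def by auto
  have "bilin n A z v = (\<Sum>j<n. \<Sum>i<n. z i * A i j * v j)"
    unfolding bilin_def by (rule sum.swap)
  also have "\<dots> = (\<Sum>j<n. (\<Sum>i<n. A j i * z i) * v j)"
    using assms(1) by (auto simp: sum_distrib_left sum_distrib_right sym_mat_def mult_ac intro!: sum.cong)
  also have "\<dots> = ip n g v" unfolding ip_def using g by simp
  finally show ?thesis .
qed


lemma ons_matrix_sym: "sym_mat n (ons_matrix eps g t)"
  unfolding sym_mat_def ons_matrix_def by (auto simp: mult.commute)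

lemma anorm_sq_ons_matrix:
  "anorm_sq n (ons_matrix eps g t) v = eps * ip n v v + (\<Sum>s\<in>{1..t}. (ip n (g s) v)\<^sup>2)"
proof -
  have diag: "(\<Sum>j<n. v i * (if i = j then 1 else 0) * v j) = (if i < n then v i * v i else 0)" for i
  proof -
    have "(\<Sum>j<n. v i * (if i = j then 1 else 0) * v j) = (\<Sum>j<n. if j = i then v i * v i else 0)"
      by (intro sum.cong) auto
    then show ?thesis by simp
  qed
  have "anorm_sq n (ons_matrix eps g t) v
      = eps * (\<Sum>i<n. \<Sum>j<n. v i * (if i = j then 1 else 0) * v j)
        + (\<Sum>i<n. \<Sum>j<n. \<Sum>s\<in>{1..t}. (g s i * v i) * (g s j * v j))"
    unfolding anorm_sq_def ons_matrix_def
    by (simp add: sum.distrib[symmetric] sum_distrib_left sum_distrib_right algebra_simps)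
  also have "(\<Sum>i<n. \<Sum>j<n. \<Sum>s\<in>{1..t}. (g s i * v i) * (g s j * v j))
      = (\<Sum>s\<in>{1..t}. \<Sum>i<n. \<Sum>j<n. (g s i * v i) * (g s j * v j))"
  proof -
    have "(\<Sum>i<n. \<Sum>j<n. \<Sum>s\<in>{1..t}. (g s i * v i) * (g s j * v j))
        = (\<Sum>i<n. \<Sum>s\<in>{1..t}. \<Sum>j<n. (g s i * v i) * (g s j * v j))"
      by (rule sum.cong[OF refl], rule sum.swap)
    also have "\<dots> = (\<Sum>s\<in>{1..t}. \<Sum>i<n. \<Sum>j<n. (g s i * v i) * (g s j * v j))"
      by (rule sum.swap)
    finally show ?thesis .
  qed
  finally show ?thesis
    by (simp add: diag ip_def power2_eq_square sum_product)
qed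

lemma anorm_sq_ons_matrix_step:
  assumes "1 \<le> t"
  shows "anorm_sq n (ons_matrix eps g t) v = anorm_sq n (ons_matrix eps g (t - 1)) v + (ip n (g t) v)\<^sup>2"
proof -
  have "{1..t} = insert t {1..t - 1}" and "t \<notin> {1..t - 1}" using assms by auto
  then show ?thesis unfolding anorm_sq_ons_matrix by simp
qed

lemma anorm_sq_ons_matrix_nonneg:
  assumes "0 \<le> eps"
  shows "0 \<le> anorm_sq n (ons_matrix eps g t) v"
  unfolding anorm_sq_ons_matrix using assms ip_self_nonneg[of n v]
  by (intro add_nonneg_nonneg) (auto intro: sum_nonneg)

lemma ons_matrix_pos_def:
  assumes "0 < eps"
  shows "pos_def_mat n (ons_matrix eps g t)"
  unfolding pos_def_mat_def
proof (intro allI impI)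
  fix v :: "nat \<Rightarrow> real" assume "\<exists>i<n. v i \<noteq> 0"
  then obtain i where "i < n" "v i \<noteq> 0" by blast
  then have "0 < ip n v v" unfolding ip_def by (intro sum_pos2[of _ i]) (auto simp: zero_less_mult_iff)
  then show "0 < anorm_sq n (ons_matrix eps g t) v"
    unfolding anorm_sq_ons_matrix using assms by (intro add_pos_nonneg) (auto intro: sum_nonneg)
qed

lemma ons_matrix_trace:
  "(\<Sum>i<n. ons_matrix eps g t i i) = real n * eps + (\<Sum>s\<in>{1..t}. ip n (g s) (g s))"
  unfolding ons_matrix_def ip_def by (simp add: sum.distrib) (rule sum.swap)

section \<open>The log-determinant potential of ONS\<close>

lemma det_ons_matrix_0: "det (mat n n (\<lambda>(i,j). ons_matrix eps g 0 i j)) = eps ^ n"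
proof -
  have "mat n n (\<lambda>(i,j). ons_matrix eps g 0 i j) = eps \<cdot>\<^sub>m 1\<^sub>m n"
    unfolding ons_matrix_def by (intro eq_matI) auto
  then show ?thesis by simp
qed

text \<open>Matrix determinant lemma: the bordered matrix \<open>[[A\<^sub>t, g\<^sub>t], [g\<^sub>t\<^sup>T, 1]]\<close> has the Schur
  complement \<open>A\<^sub>t - g\<^sub>t g\<^sub>t\<^sup>T = A\<^sub>t\<^sub>-\<^sub>1\<close>.\<close>
lemma det_ons_matrix_prev:
  assumes t: "1 \<le> t" and z: "mvmul n (ons_matrix eps g t) z = g t"
  shows "det (mat n n (\<lambda>(i,j). ons_matrix eps g (t - 1) i j))
       = (1 - ip n (g t) z) * det (mat n n (\<lambda>(i,j). ons_matrix eps g t i j))"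
proof -
  let ?B = "bordered_mat n (ons_matrix eps g t) (g t) (g t) 1"
  have "{1..t} = insert t {1..t - 1}" and "t \<notin> {1..t - 1}" using t by auto
  then have "(\<lambda>(i,j). ons_matrix eps g t i j - g t i * g t j / 1) = (\<lambda>(i,j). ons_matrix eps g (t - 1) i j)"
    unfolding ons_matrix_def by auto
  then have "det ?B = det (mat n n (\<lambda>(i,j). ons_matrix eps g (t - 1) i j))"
    using det_bordered_mat_schur[of 1 n "ons_matrix eps g t" "g t" "g t"] by simp
  moreover have "(\<Sum>j<n. ons_matrix eps g t i j * z j) = g t i" if "i < n" for i
    using fun_cong[OF z, of i] that by (simp add: mvmul_def)
  then have "det ?B = (1 - ip n (g t) z) * det (mat n n (\<lambda>(i,j). ons_matrix eps g t i j))"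
    unfolding ip_def by (rule det_bordered_mat_solve)
  ultimately show ?thesis by simp
qed

lemma sum_ln_le_ln_mean:
  fixes a :: "nat \<Rightarrow> real"
  assumes pos: "\<And>i. i < n \<Longrightarrow> 0 < a i" and n: "1 \<le> n"
  shows "(\<Sum>i<n. ln (a i)) \<le> real n * ln ((\<Sum>i<n. a i) / real n)"
proof -
  define m where "m = (\<Sum>i<n. a i) / real n"
  have "0 < (\<Sum>i<n. a i)" using pos n by (intro sum_pos) (auto simp: lessThan_empty_iff)
  then have m: "0 < m" "(\<Sum>i<n. a i) / m = real n" using n by (auto simp: m_def)
  have "ln (a i) \<le> ln m + (a i / m - 1)" if i: "i < n" for i
    using ln_le_minus_one[of "a i / m"] pos[OF i] m by (simp add: ln_div)
  then have "(\<Sum>i<n. ln (a i)) \<le> (\<Sum>i<n. ln m + (a i / m - 1))" by (intro sum_mono) auto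
  also have "\<dots> = real n * ln m + (\<Sum>i<n. a i) / m - real n"
    by (simp add: sum.distrib sum_subtractf sum_divide_distrib)
  finally show ?thesis using m by (simp add: m_def)
qed

lemma ln_det_ons_matrix_le:
  assumes eps: "0 < eps" and n: "1 \<le> n"
    and L: "\<And>s. s \<in> {1..T} \<Longrightarrow> ip n (g s) (g s) \<le> L\<^sup>2"
  shows "ln (det (mat n n (\<lambda>(i,j). ons_matrix eps g T i j))) \<le> real n * ln (eps + real T * L\<^sup>2 / real n)"
proof -
  let ?A = "ons_matrix eps g T"
  have diag: "0 < ?A i i" if "i < n" for i
    using pos_def_mat_diag_pos[OF ons_matrix_pos_def[OF eps] that] .
  have det: "0 < det (mat n n (\<lambda>(i,j). ?A i j))" "det (mat n n (\<lambda>(i,j). ?A i j)) \<le> (\<Prod>i<n. ?A i i)"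
    using det_pos_def_le_prod_diag[OF ons_matrix_sym ons_matrix_pos_def[OF eps]] by auto
  have "(\<Sum>s\<in>{1..T}. ip n (g s) (g s)) \<le> (\<Sum>s\<in>{1..T}. L\<^sup>2)"
    using L by (rule sum_mono)
  then have "(\<Sum>i<n. ?A i i) \<le> real n * eps + real T * L\<^sup>2"
    unfolding ons_matrix_trace by simp
  moreover have "(real n * eps + real T * L\<^sup>2) / real n = eps + real T * L\<^sup>2 / real n"
    using n by (simp add: field_simps)
  ultimately have mean: "(\<Sum>i<n. ?A i i) / real n \<le> eps + real T * L\<^sup>2 / real n"
    by (metis divide_right_mono of_nat_0_le_iff)
  have "0 < (\<Sum>i<n. ?A i i) / real n"
    using diag n by (intro divide_pos_pos sum_pos) (auto simp: lessThan_empty_iff)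
  then have ln_mean: "ln ((\<Sum>i<n. ?A i i) / real n) \<le> ln (eps + real T * L\<^sup>2 / real n)"
    using mean by simp
  have "ln (det (mat n n (\<lambda>(i,j). ?A i j))) \<le> ln (\<Prod>i<n. ?A i i)"
    using det by simp
  also have "\<dots> = (\<Sum>i<n. ln (?A i i))"
    using diag by (subst ln_prod) (auto simp: less_imp_neq[symmetric])
  also have "\<dots> \<le> real n * ln ((\<Sum>i<n. ?A i i) / real n)"
    using diag n by (intro sum_ln_le_ln_mean)
  also have "\<dots> \<le> real n * ln (eps + real T * L\<^sup>2 / real n)"
    using ln_mean by (intro mult_left_mono) auto
  finally show ?thesis .
qed

lemma sum_le_telescope:
  fixes c F :: "nat \<Rightarrow> real"
  assumes "\<And>t. t \<in> {1..T} \<Longrightarrow> c t \<le> F (t - 1) - F t"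
  shows "(\<Sum>t\<in>{1..T}. c t) \<le> F 0 - F T"
  using assms
proof (induction T)
  case (Suc T)
  have "(\<Sum>t\<in>{1..T}. c t) \<le> F 0 - F T" using Suc by simp
  moreover have "c (Suc T) \<le> F T - F (Suc T)" using Suc.prems[of "Suc T"] by simp
  ultimately show ?case by simp
qed simp

text \<open>Elliptical potential lemma: \<open>\<langle>g\<^sub>t, A\<^sub>t\<^sup>-\<^sup>1 g\<^sub>t\<rangle> = 1 - det A\<^sub>t\<^sub>-\<^sub>1 / det A\<^sub>t \<le> ln (det A\<^sub>t / det A\<^sub>t\<^sub>-\<^sub>1)\<close>,
  and the log-determinants telescope.\<close>
lemma elliptical_potential_bound:
  assumes eps: "0 < eps" and n: "1 \<le> n"
    and z: "\<And>t. t \<in> {1..T} \<Longrightarrow> mvmul n (ons_matrix eps g t) (z t) = g t"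
    and L: "\<And>t. t \<in> {1..T} \<Longrightarrow> ip n (g t) (g t) \<le> L\<^sup>2"
  shows "(\<Sum>t\<in>{1..T}. ip n (g t) (z t)) \<le> real n * ln (1 + real T * L\<^sup>2 / (real n * eps))"
proof -
  define M where "M t = det (mat n n (\<lambda>(i,j). ons_matrix eps g t i j))" for t
  have M: "0 < M t" for t
    unfolding M_def using det_pos_def_le_prod_diag[OF ons_matrix_sym ons_matrix_pos_def[OF eps]] by blast
  have "ip n (g t) (z t) \<le> - ln (M (t - 1)) - - ln (M t)" if t: "t \<in> {1..T}" for t
  proof -
    have prev: "M (t - 1) = (1 - ip n (g t) (z t)) * M t"
      unfolding M_def using t z[OF t] by (intro det_ons_matrix_prev) auto
    then have "0 < 1 - ip n (g t) (z t)" using M[of t] M[of "t - 1"] by (simp add: zero_less_mult_iff)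
    then show ?thesis
      using prev M[of t] ln_le_minus_one[of "1 - ip n (g t) (z t)"] by (simp add: ln_mult)
  qed
  then have "(\<Sum>t\<in>{1..T}. ip n (g t) (z t)) \<le> ln (M T) - ln (M 0)"
    using sum_le_telescope[of T _ "\<lambda>t. - ln (M t)"] by simp
  also have "\<dots> \<le> real n * ln (eps + real T * L\<^sup>2 / real n) - real n * ln eps"
    using ln_det_ons_matrix_le[OF eps n L] eps
    by (simp add: M_def det_ons_matrix_0 ln_realpow)
  also have "ln (eps + real T * L\<^sup>2 / real n) = ln eps + ln (1 + real T * L\<^sup>2 / (real n * eps))"
  proof -
    have "eps + real T * L\<^sup>2 / real n = eps * (1 + real T * L\<^sup>2 / (real n * eps))"
      using eps n by (simp add: field_simps)
    moreover have "0 < 1 + real T * L\<^sup>2 / (real n * eps)"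
      using eps by (intro add_pos_nonneg) auto
    ultimately show ?thesis using eps by (simp add: ln_mult)
  qed
  finally show ?thesis by (simp add: algebra_simps)
qed


section \<open>Regret of Online Newton Step\<close>

definition is_anorm_proj ::
  "nat \<Rightarrow> (nat \<Rightarrow> real) set \<Rightarrow> (nat \<Rightarrow> nat \<Rightarrow> real) \<Rightarrow> (nat \<Rightarrow> real) \<Rightarrow> (nat \<Rightarrow> real) \<Rightarrow> bool" where
  "is_anorm_proj n W A y w \<longleftrightarrow> w \<in> W \<and> (\<forall>v\<in>W. anorm_sq n A (vsub y w) \<le> anorm_sq n A (vsub y v))"

text \<open>First-order optimality: moving from \<open>w\<close> towards \<open>u\<close> by a small step \<open>s\<close> changes the
  objective by \<open>-2 s \<langle>y - w, u - w\<rangle>\<^sub>A + O(s\<^sup>2)\<close>.\<close>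
lemma anorm_proj_obtuse:
  assumes sym: "sym_mat n A" and psd: "\<And>v. 0 \<le> anorm_sq n A v"
    and cvx: "convex_n W" and proj: "is_anorm_proj n W A y w" and u: "u \<in> W"
  shows "bilin n A (vsub y w) (vsub u w) \<le> 0"
proof (rule ccontr)
  define p where "p = vsub y w"
  define q where "q = vsub u w"
  assume "\<not> bilin n A (vsub y w) (vsub u w) \<le> 0"
  then have pq: "0 < bilin n A p q" by (simp add: p_def q_def)
  have qq: "0 \<le> bilin n A q q" using psd[of q] by (simp add: anorm_sq_bilin)
  define s where "s = min 1 (bilin n A p q / (bilin n A q q + 1))"
  have s: "0 < s" "s \<le> 1" using pq qq by (auto simp: s_def)
  have "vadd (vscale s u) (vscale (1 - s) w) \<in> W"
    using cvx u proj s unfolding convex_n_def is_anorm_proj_def by auto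
  moreover have "vsub y (vadd (vscale s u) (vscale (1 - s) w)) = (\<lambda>i. p i - s * q i)"
    unfolding p_def q_def vsub_def vadd_def vscale_def by (auto simp: algebra_simps)
  ultimately have "bilin n A p p \<le> bilin n A (\<lambda>i. p i - s * q i) (\<lambda>i. p i - s * q i)"
    using proj unfolding is_anorm_proj_def anorm_sq_bilin p_def by metis
  then have "s * (2 * bilin n A p q) \<le> s * (s * bilin n A q q)"
    unfolding bilin_diff_self[OF sym] by (simp add: algebra_simps power2_eq_square)
  then have "2 * bilin n A p q \<le> s * bilin n A q q" using s by simp
  also have "\<dots> \<le> (bilin n A p q / (bilin n A q q + 1)) * bilin n A q q"
    using qq by (intro mult_right_mono) (auto simp: s_def)
  also have "\<dots> \<le> bilin n A p q"
    using qq pq by (simp add: field_simps)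
  finally show False using pq by simp
qed

lemma anorm_sq_proj_le:
  assumes sym: "sym_mat n A" and psd: "\<And>v. 0 \<le> anorm_sq n A v"
    and cvx: "convex_n W" and proj: "is_anorm_proj n W A y w" and u: "u \<in> W"
  shows "anorm_sq n A (vsub w u) \<le> anorm_sq n A (vsub y u)"
proof -
  define p where "p = vsub y w"
  define q where "q = vsub u w"
  have "vsub y u = (\<lambda>i. p i - 1 * q i)"
    unfolding p_def q_def vsub_def by auto
  then have "anorm_sq n A (vsub y u) = bilin n A p p - 2 * 1 * bilin n A p q + 1\<^sup>2 * bilin n A q q"
    unfolding anorm_sq_bilin by (simp only: bilin_diff_self[OF sym])
  moreover have "anorm_sq n A (vsub w u) = bilin n A q q"
    unfolding anorm_sq_bilin q_def vsub_def bilin_def by (auto intro!: sum.cong simp: algebra_simps)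
  moreover have "bilin n A p q \<le> 0" and "0 \<le> bilin n A p p"
    using anorm_proj_obtuse[OF assms] psd[of p] by (auto simp: p_def q_def anorm_sq_bilin)
  ultimately show ?thesis by simp
qed

lemma ons_step_anorm_sq_le:
  assumes sym: "sym_mat n A" and psd: "\<And>v. 0 \<le> anorm_sq n A v"
    and cvx: "convex_n W" and u: "u \<in> W" and gam: "0 < gam" and z: "mvmul n A z = g"
    and proj: "is_anorm_proj n W A (vsub w (vscale (1 / gam) z)) w'"
  shows "anorm_sq n A (vsub w' u)
     \<le> anorm_sq n A (vsub w u) - (2 / gam) * ip n g (vsub w u) + (1 / gam\<^sup>2) * ip n g z"
proof -
  have "anorm_sq n A (vsub w' u) \<le> anorm_sq n A (vsub (vsub w (vscale (1 / gam) z)) u)"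
    by (rule anorm_sq_proj_le[OF sym psd cvx proj u])
  also have "vsub (vsub w (vscale (1 / gam) z)) u = (\<lambda>i. vsub w u i - (1 / gam) * z i)"
    unfolding vsub_def vscale_def by auto
  also have "anorm_sq n A \<dots> = anorm_sq n A (vsub w u) - 2 * (1 / gam) * bilin n A (vsub w u) z
       + (1 / gam)\<^sup>2 * bilin n A z z"
    unfolding anorm_sq_bilin by (rule bilin_diff_self[OF sym])
  also have "bilin n A (vsub w u) z = ip n g (vsub w u)"
    using bilin_comm[OF sym] bilin_mvmul_left[OF sym z] by metis
  also have "bilin n A z z = ip n g z"
    using bilin_mvmul_left[OF sym z] by metis
  finally show ?thesis by (simp add: power_divide)
qed

lemma is_ONS_runE:
  assumes "is_ONS_run n W Dw gam grad T w"
  obtains z where "w 1 \<in> W"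
    and "\<And>t. t \<in> {1..T} \<Longrightarrow>
      mvmul n (ons_matrix (real n / (Dw\<^sup>2 * gam\<^sup>2)) (\<lambda>s. grad s (w s)) t) (z t) = grad t (w t) \<and>
      is_anorm_proj n W (ons_matrix (real n / (Dw\<^sup>2 * gam\<^sup>2)) (\<lambda>s. grad s (w s)) t)
        (vsub (w t) (vscale (1 / gam) (z t))) (w (t + 1))"
proof -
  from assms have "w 1 \<in> W" and "\<forall>t\<in>{1..T}. \<exists>z.
      mvmul n (ons_matrix (real n / (Dw\<^sup>2 * gam\<^sup>2)) (\<lambda>s. grad s (w s)) t) z = grad t (w t) \<and>
      is_anorm_proj n W (ons_matrix (real n / (Dw\<^sup>2 * gam\<^sup>2)) (\<lambda>s. grad s (w s)) t)
        (vsub (w t) (vscale (1 / gam) z)) (w (t + 1))"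
    unfolding is_ONS_run_def is_anorm_proj_def Let_def by blast+
  then show ?thesis using that by metis
qed

lemma is_ONS_run_in_set:
  assumes "is_ONS_run n W Dw gam grad T w" and "t \<in> {1..Suc T}"
  shows "w t \<in> W"
proof -
  obtain z where "w 1 \<in> W" and "\<And>s. s \<in> {1..T} \<Longrightarrow> is_anorm_proj n W
      (ons_matrix (real n / (Dw\<^sup>2 * gam\<^sup>2)) (\<lambda>s. grad s (w s)) s) (vsub (w s) (vscale (1 / gam) (z s))) (w (s + 1))"
    using is_ONS_runE[OF assms(1)] by metis
  moreover have "t = 1 \<or> (t - 1 \<in> {1..T} \<and> t = t - 1 + 1)" using assms(2) by auto
  ultimately show ?thesis unfolding is_anorm_proj_def by metis
qed

text \<open>The potential is \<open>\<parallel>w\<^sub>t\<^sub>+\<^sub>1 - u\<parallel>\<^sup>2\<close> in the norm of \<open>A\<^sub>t\<close>; passing from \<open>A\<^sub>t\<^sub>-\<^sub>1\<close> to \<open>A\<^sub>t\<close> costs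
  exactly \<open>\<langle>g\<^sub>t, w\<^sub>t - u\<rangle>\<^sup>2\<close>, which is why that square appears on the left.\<close>
lemma ons_potential_bound:
  assumes cvx: "convex_n W" and u: "u \<in> W" and gam: "0 < gam" and eps: "0 \<le> eps"
    and step: "\<And>t. t \<in> {1..T} \<Longrightarrow> mvmul n (ons_matrix eps g t) (z t) = g t \<and>
      is_anorm_proj n W (ons_matrix eps g t) (vsub (w t) (vscale (1 / gam) (z t))) (w (t + 1))"
  shows "(\<Sum>t\<in>{1..T}. (2 / gam) * ip n (g t) (vsub (w t) u) - (ip n (g t) (vsub (w t) u))\<^sup>2
            - (1 / gam\<^sup>2) * ip n (g t) (z t)) \<le> eps * ip n (vsub (w 1) u) (vsub (w 1) u)"
proof -
  define F where "F t = anorm_sq n (ons_matrix eps g t) (vsub (w (Suc t)) u)" for t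
  have "(2 / gam) * ip n (g t) (vsub (w t) u) - (ip n (g t) (vsub (w t) u))\<^sup>2
      - (1 / gam\<^sup>2) * ip n (g t) (z t) \<le> F (t - 1) - F t" if t: "t \<in> {1..T}" for t
  proof -
    have "F t \<le> anorm_sq n (ons_matrix eps g t) (vsub (w t) u)
        - (2 / gam) * ip n (g t) (vsub (w t) u) + (1 / gam\<^sup>2) * ip n (g t) (z t)"
      unfolding F_def Suc_eq_plus1 using step[OF t]
      by (intro ons_step_anorm_sq_le[OF ons_matrix_sym anorm_sq_ons_matrix_nonneg[OF eps] cvx u gam]) auto
    moreover have "anorm_sq n (ons_matrix eps g t) (vsub (w t) u) = F (t - 1) + (ip n (g t) (vsub (w t) u))\<^sup>2"
      using t anorm_sq_ons_matrix_step[of t] by (simp add: F_def)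
    ultimately show ?thesis by simp
  qed
  then have "(\<Sum>t\<in>{1..T}. (2 / gam) * ip n (g t) (vsub (w t) u) - (ip n (g t) (vsub (w t) u))\<^sup>2
      - (1 / gam\<^sup>2) * ip n (g t) (z t)) \<le> F 0 - F T"
    by (rule sum_le_telescope)
  moreover have "0 \<le> F T" unfolding F_def using eps by (rule anorm_sq_ons_matrix_nonneg)
  moreover have "F 0 = eps * ip n (vsub (w 1) u) (vsub (w 1) u)"
    by (simp add: F_def anorm_sq_ons_matrix)
  ultimately show ?thesis by linarith
qed

lemma ons_regret_bound:
  assumes run: "is_ONS_run n W Dw gam grad T w" and cvx: "convex_n W" and u: "u \<in> W"
    and diam: "diam_le n W Dw" and n: "1 \<le> n" and Dw: "0 < Dw" and gam: "0 < gam"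
    and L: "\<And>t. t \<in> {1..T} \<Longrightarrow> ip n (grad t (w t)) (grad t (w t)) \<le> L\<^sup>2"
  shows "(\<Sum>t\<in>{1..T}. 2 * (gam * ip n (grad t (w t)) (vsub (w t) u))
            - (gam * ip n (grad t (w t)) (vsub (w t) u))\<^sup>2)
     \<le> real n * (1 + ln (1 + real T * L\<^sup>2 * (Dw * gam)\<^sup>2 / (real n)\<^sup>2))"
proof -
  define eps where "eps = real n / (Dw\<^sup>2 * gam\<^sup>2)"
  define g where "g s = grad s (w s)" for s
  define b where "b t = ip n (g t) (vsub (w t) u)" for t
  obtain z where w1: "w 1 \<in> W" and step: "\<And>t. t \<in> {1..T} \<Longrightarrow>
      mvmul n (ons_matrix eps g t) (z t) = g t \<and>
      is_anorm_proj n W (ons_matrix eps g t) (vsub (w t) (vscale (1 / gam) (z t))) (w (t + 1))"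
    using is_ONS_runE[OF run] unfolding eps_def g_def by metis
  define r where "r t = ip n (g t) (z t)" for t
  have eps: "0 < eps" using n Dw gam by (simp add: eps_def)
  have "(\<Sum>t\<in>{1..T}. (2 / gam) * b t - (b t)\<^sup>2 - (1 / gam\<^sup>2) * r t)
      \<le> eps * ip n (vsub (w 1) u) (vsub (w 1) u)"
    unfolding b_def r_def by (rule ons_potential_bound[OF cvx u gam less_imp_le[OF eps] step])
  also have "\<dots> \<le> eps * Dw\<^sup>2"
    using ip_self_le_of_diam_le[OF diam w1 u] eps by (intro mult_left_mono) auto
  finally have pot: "(\<Sum>t\<in>{1..T}. (2 / gam) * b t - (b t)\<^sup>2 - (1 / gam\<^sup>2) * r t) \<le> eps * Dw\<^sup>2" .
  have ell: "(\<Sum>t\<in>{1..T}. r t) \<le> real n * ln (1 + real T * L\<^sup>2 / (real n * eps))"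
    unfolding r_def using step L eps n by (intro elliptical_potential_bound) (auto simp flip: g_def)
  have "2 * (gam * b t) - (gam * b t)\<^sup>2
      = gam\<^sup>2 * ((2 / gam) * b t - (b t)\<^sup>2 - (1 / gam\<^sup>2) * r t) + r t" for t
    using gam by (simp add: field_simps power2_eq_square)
  then have "(\<Sum>t\<in>{1..T}. 2 * (gam * b t) - (gam * b t)\<^sup>2)
      = gam\<^sup>2 * (\<Sum>t\<in>{1..T}. (2 / gam) * b t - (b t)\<^sup>2 - (1 / gam\<^sup>2) * r t) + (\<Sum>t\<in>{1..T}. r t)"
    by (simp add: sum.distrib sum_distrib_left)
  also have "\<dots> \<le> gam\<^sup>2 * (eps * Dw\<^sup>2) + real n * ln (1 + real T * L\<^sup>2 / (real n * eps))"
    using pot ell by (intro add_mono mult_left_mono) auto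
  also have "gam\<^sup>2 * (eps * Dw\<^sup>2) = real n" using Dw gam by (simp add: eps_def)
  also have "real T * L\<^sup>2 / (real n * eps) = real T * L\<^sup>2 * (Dw * gam)\<^sup>2 / (real n)\<^sup>2"
    using n Dw gam by (simp add: eps_def field_simps power2_eq_square)
  finally show ?thesis unfolding b_def g_def by (simp add: algebra_simps)
qed


section \<open>Surrogate regret of the ONS-based learner\<close>

lemma surr_grad_at_center: "surr_grad n eta c xh x c = vscale eta (vsub xh x)"
  unfolding surr_grad_def by (simp add: vsub_def ip_def)

lemma argmax_regret_le_gap:
  assumes "is_argmax n cstar X x" and "is_argmax n c X xh"
  shows "0 \<le> ip n cstar (vsub x xh)" and "ip n cstar (vsub x xh) \<le> ip n (vsub c cstar) (vsub xh x)"
proof -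
  have "ip n cstar xh \<le> ip n cstar x" and "ip n c x \<le> ip n c xh"
    using assms unfolding is_argmax_def by auto
  then show "0 \<le> ip n cstar (vsub x xh)" and "ip n cstar (vsub x xh) \<le> ip n (vsub c cstar) (vsub xh x)"
    by (simp_all add: ip_vsub_left ip_vsub_right)
qed

lemma argmax_gap_le_width:
  assumes "is_argmax n cstar X x" and "is_argmax n c X xh" and "cstar \<in> Th" and "c \<in> Th"
    and "\<forall>c\<in>Th. \<forall>c'\<in>Th. \<forall>y\<in>X. \<forall>y'\<in>X. ip n (vsub c c') (vsub y y') \<le> B"
  shows "0 \<le> ip n (vsub c cstar) (vsub xh x) \<and> ip n (vsub c cstar) (vsub xh x) \<le> B"
proof
  show "0 \<le> ip n (vsub c cstar) (vsub xh x)"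
    using argmax_regret_le_gap[OF assms(1,2)] by linarith
  have "x \<in> X" and "xh \<in> X" using assms(1,2) by (auto simp: is_argmax_def)
  then show "ip n (vsub c cstar) (vsub xh x) \<le> B" using assms(3-5) by blast
qed

lemma one_plus_ln_le_four_ln:
  fixes Z q :: real
  assumes Z: "exp 1 \<le> Z" and q: "0 \<le> q" "q \<le> Z\<^sup>2"
  shows "1 + ln (1 + q) \<le> 4 * ln Z"
proof -
  have "2 \<le> exp (1::real)" using exp_ge_add_one_self[of 1] by simp
  then have Z1: "1 \<le> Z" and Z0: "0 < Z" using Z by auto
  have lnZ: "1 \<le> ln Z" using Z Z0 by (simp add: ln_ge_iff)
  have "1 \<le> Z\<^sup>2" using Z1 by (simp add: one_le_power)
  then have "ln (1 + q) \<le> ln (2 * Z\<^sup>2)" using q by (intro ln_mono) auto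
  also have "\<dots> = ln 2 + 2 * ln Z" using Z0 by (simp add: ln_mult ln_realpow)
  also have "ln 2 \<le> (1::real)" using ln_le_minus_one[of 2] by simp
  finally show ?thesis using lnZ by simp
qed

lemma ons_surrogate_regret_le:
  fixes B K :: real and chat x xhat :: "nat \<Rightarrow> nat \<Rightarrow> real"
  assumes run: "is_ONS_run n Th D (25 / 49)
      (\<lambda>t. surr_grad n (1 / (5 * B)) (chat t) (xhat t) (x t)) T chat"
    and cvx: "convex_n Th" and cs: "cstar \<in> Th" and diam: "diam_le n Th D"
    and n: "1 \<le> n" and D: "0 < D" and B: "0 < B"
    and gap: "\<And>t. t \<in> {1..T} \<Longrightarrow> 0 \<le> ip n (vsub (chat t) cstar) (vsub (xhat t) (x t)) \<and>
      ip n (vsub (chat t) cstar) (vsub (xhat t) (x t)) \<le> B"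
    and K: "\<And>t. t \<in> {1..T} \<Longrightarrow> ip n (vsub (xhat t) (x t)) (vsub (xhat t) (x t)) \<le> K\<^sup>2"
  shows "(\<Sum>t\<in>{1..T}. ip n (vsub (chat t) cstar) (vsub (xhat t) (x t)))
     \<le> (49 / 5) * B * real n * (1 + ln (1 + 25 * real T * (D * K)\<^sup>2 / (2401 * (B * real n)\<^sup>2)))"
proof -
  define eta :: real where "eta = 1 / (5 * B)"
  define gam :: real where "gam = 25 / 49"
  define d where "d t = vsub (xhat t) (x t)" for t
  define a where "a t = ip n (vsub (chat t) cstar) (d t)" for t
  define q where "q = real T * (eta * K)\<^sup>2 * (D * gam)\<^sup>2 / (real n)\<^sup>2"
  have grad: "surr_grad n (1 / (5 * B)) (chat t) (xhat t) (x t) (chat t) = vscale eta (d t)" for t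
    unfolding eta_def d_def by (rule surr_grad_at_center)
  have ip_grad: "ip n (vscale eta (d t)) (vsub (chat t) cstar) = eta * a t" for t
    by (simp add: ip_vscale_left a_def ip_comm)
  have "ip n (vscale eta (d t)) (vscale eta (d t)) \<le> (eta * K)\<^sup>2" if "t \<in> {1..T}" for t
    using K[OF that] by (simp add: ip_vscale_left ip_vscale_right power_mult_distrib mult_left_mono
        d_def flip: power2_eq_square mult.assoc)
  then have L: "ip n (surr_grad n (1 / (5 * B)) (chat t) (xhat t) (x t) (chat t))
      (surr_grad n (1 / (5 * B)) (chat t) (xhat t) (x t) (chat t)) \<le> (eta * K)\<^sup>2" if "t \<in> {1..T}" for t
    unfolding grad using that .
  have "(\<Sum>t\<in>{1..T}. 2 * (gam * ip n (surr_grad n (1 / (5 * B)) (chat t) (xhat t) (x t) (chat t))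
        (vsub (chat t) cstar)) - (gam * ip n (surr_grad n (1 / (5 * B)) (chat t) (xhat t) (x t) (chat t))
        (vsub (chat t) cstar))\<^sup>2) \<le> real n * (1 + ln (1 + q))"
    unfolding gam_def q_def by (rule ons_regret_bound[OF run cvx cs diam n D _ L]) simp
  then have "(\<Sum>t\<in>{1..T}. 2 * (gam * (eta * a t)) - (gam * (eta * a t))\<^sup>2) \<le> real n * (1 + ln (1 + q))"
    unfolding grad ip_grad .
  moreover have "gam * (eta * a t) \<le> 2 * (gam * (eta * a t)) - (gam * (eta * a t))\<^sup>2" if "t \<in> {1..T}" for t
  proof -
    have "0 \<le> gam * (eta * a t)" "gam * (eta * a t) \<le> 1"
      using gap[OF that] B by (auto simp: a_def d_def gam_def eta_def field_simps)
    then have "gam * (eta * a t) * (gam * (eta * a t)) \<le> 1 * (gam * (eta * a t))"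
      by (intro mult_right_mono)
    then show ?thesis by (simp only: power2_eq_square)
  qed
  ultimately have "gam * eta * (\<Sum>t\<in>{1..T}. a t) \<le> real n * (1 + ln (1 + q))"
    by (smt (verit) sum_mono sum_distrib_left mult.assoc)
  moreover have "q = 25 * real T * (D * K)\<^sup>2 / (2401 * (B * real n)\<^sup>2)"
    using B unfolding q_def eta_def gam_def by (simp add: field_simps power2_eq_square)
  ultimately show ?thesis
    using B unfolding a_def d_def by (simp add: gam_def eta_def field_simps)
qed

lemma surrogate_regret_bound:
  fixes n T :: nat and Th :: "(nat \<Rightarrow> real) set" and cstar :: "nat \<Rightarrow> real"
    and X :: "nat \<Rightarrow> (nat \<Rightarrow> real) set" and x chat xhat :: "nat \<Rightarrow> nat \<Rightarrow> real" and D K B :: real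
  assumes n: "1 \<le> n" and T: "1 \<le> T" and cvx: "convex_n Th" and cs: "cstar \<in> Th"
    and D: "0 < D" and B: "0 < B" and diam: "diam_le n Th D"
    and rounds: "\<And>t. t \<in> {1..T} \<Longrightarrow> diam_le n (X t) K \<and> is_argmax n cstar (X t) (x t) \<and>
       is_argmax n (chat t) (X t) (xhat t) \<and>
       (\<forall>c\<in>Th. \<forall>c'\<in>Th. \<forall>y\<in>X t. \<forall>y'\<in>X t. ip n (vsub c c') (vsub y y') \<le> B)"
    and run: "is_ONS_run n Th D (25 / 49)
      (\<lambda>t. surr_grad n (1 / (5 * B)) (chat t) (xhat t) (x t)) T chat"
    and Z: "exp 1 \<le> D * K * real T / (B * real n)"
  shows "(\<Sum>t\<in>{1..T}. ip n (vsub (chat t) cstar) (vsub (xhat t) (x t)))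
     \<le> 40 * B * real n * ln (D * K * real T / (B * real n))"
proof -
  define Z where "Z = D * K * real T / (B * real n)"
  define q where "q = 25 * real T * (D * K)\<^sup>2 / (2401 * (B * real n)\<^sup>2)"
  have round: "(0 \<le> ip n (vsub (chat t) cstar) (vsub (xhat t) (x t)) \<and>
      ip n (vsub (chat t) cstar) (vsub (xhat t) (x t)) \<le> B) \<and>
      ip n (vsub (xhat t) (x t)) (vsub (xhat t) (x t)) \<le> K\<^sup>2" if t: "t \<in> {1..T}" for t
  proof -
    have "chat t \<in> Th" using is_ONS_run_in_set[OF run] t by auto
    then have "0 \<le> ip n (vsub (chat t) cstar) (vsub (xhat t) (x t)) \<and>
        ip n (vsub (chat t) cstar) (vsub (xhat t) (x t)) \<le> B"
      using rounds[OF t] cs argmax_gap_le_width[of n cstar "X t" "x t" "chat t" "xhat t" Th B] by simp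
    moreover have "x t \<in> X t" "xhat t \<in> X t" using rounds[OF t] by (auto simp: is_argmax_def)
    then have "ip n (vsub (xhat t) (x t)) (vsub (xhat t) (x t)) \<le> K\<^sup>2"
      using rounds[OF t] ip_self_le_of_diam_le[of n "X t" K "xhat t" "x t"] by simp
    ultimately show ?thesis by simp
  qed
  have "q \<le> Z\<^sup>2"
  proof -
    have "q = Z\<^sup>2 * (25 / (2401 * real T))"
      using T n B unfolding q_def Z_def by (simp add: field_simps power2_eq_square)
    also have "\<dots> \<le> Z\<^sup>2 * 1"
      using T by (intro mult_left_mono) auto
    finally show ?thesis by simp
  qed
  moreover have q0: "0 \<le> q" by (simp add: q_def)
  ultimately have lnZ: "1 + ln (1 + q) \<le> 4 * ln Z"
    using Z by (intro one_plus_ln_le_four_ln) (auto simp: Z_def)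
  have "(\<Sum>t\<in>{1..T}. ip n (vsub (chat t) cstar) (vsub (xhat t) (x t)))
      \<le> (49 / 5) * B * real n * (1 + ln (1 + q))"
    unfolding q_def using round by (intro ons_surrogate_regret_le[OF run cvx cs diam n D B]) auto
  also have "\<dots> \<le> (49 / 5) * B * real n * (4 * ln Z)"
    using lnZ B by (intro mult_left_mono) auto
  also have "\<dots> \<le> 40 * B * real n * ln Z"
  proof -
    have "0 \<le> ln (1 + q)" using q0 by simp
    then have "0 \<le> B * real n * ln Z" using lnZ B by simp
    then show ?thesis by simp
  qed
  finally show ?thesis unfolding Z_def .
qed


theorem theorem1:
  shows "\<exists>C::real. C > 0 \<and>
    (\<forall>(n::nat) (T::nat) (\<Theta>::(nat \<Rightarrow> real) set) (cstar::nat \<Rightarrow> real)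
       (X::nat \<Rightarrow> (nat \<Rightarrow> real) set) (x::nat \<Rightarrow> (nat \<Rightarrow> real))
       (D::real) (K::real) (B::real)
       (chat::nat \<Rightarrow> (nat \<Rightarrow> real)) (xhat::nat \<Rightarrow> (nat \<Rightarrow> real)).
       n \<ge> 1 \<and> T \<ge> 1 \<and>
       \<Theta> \<subseteq> Rn n \<and> closed \<Theta> \<and> convex_n \<Theta> \<and> cstar \<in> \<Theta> \<and>
       D > 0 \<and> K > 0 \<and> B > 0 \<and>
       diam_le n \<Theta> D \<and>
       (\<forall>t\<in>{1..T}. X t \<subseteq> Rn n \<and> X t \<noteq> {} \<and> compact (X t) \<and>
          diam_le n (X t) K \<and> is_argmax n cstar (X t) (x t) \<and>
          (\<forall>c\<in>\<Theta>. \<forall>c'\<in>\<Theta>. \<forall>y\<in>X t. \<forall>y'\<in>X t. ip n (vsub c c') (vsub y y') \<le> B)) \<and>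
       (\<forall>t\<in>{1..T}. is_argmax n (chat t) (X t) (xhat t)) \<and>
       is_ONS_run n \<Theta> D (25 / 49)
         (\<lambda>t. surr_grad n (1 / (5 * B)) (chat t) (xhat t) (x t)) T chat
     \<longrightarrow>
       (\<Sum>t\<in>{1..T}. ip n cstar (vsub (x t) (xhat t)))
          \<le> (\<Sum>t\<in>{1..T}. ip n (vsub (chat t) cstar) (vsub (xhat t) (x t))) \<and>
       (exp 1 \<le> D * K * real T / (B * real n) \<longrightarrow>
          (\<Sum>t\<in>{1..T}. ip n (vsub (chat t) cstar) (vsub (xhat t) (x t)))
            \<le> C * B * real n * ln (D * K * real T / (B * real n))))"
proof ((intro exI[of _ "40::real"] conjI allI impI; (elim conjE)?), goal_cases)
  case 1
  show ?case by simp
next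
  case (2 n T \<Theta> cstar X x D K B chat xhat)
  then have "is_argmax n cstar (X t) (x t)" and "is_argmax n (chat t) (X t) (xhat t)"
    if "t \<in> {1..T}" for t
    using that by auto
  then show ?case by (intro sum_mono argmax_regret_le_gap(2))
next
  case (3 n T \<Theta> cstar X x D K B chat xhat)
  then show ?case by (intro surrogate_regret_bound) auto
qed

end
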